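(* Let $\bm{B}\in\mathbb{C}^{m\times d_1}$, $\bm{A}\in\mathbb{C}^{m\times d_2}$, $\bm{y}\in\mathbb{C}^m$. The functions $F_1,F_2:\mathbb{R}^{d_1}\times\mathbb{R}^{d_2}\to\mathbb{R}$ defined by $$F_1(\bm{h},\bm{x})=\frac14\|\bm{Bh}\|_4^4+\frac14\|\bm{Ax}\|_4^4+\frac12\Big(\|\bm{Bh}\odot\bm{Ax}\|_2^2+\|\bm{y}\odot\bm{Bh}\|_2^2+\|\bm{Ax}\|_2^2+\|\bm{y}\|_2^2\Big),$$ $$F_2(\bm{h},\bm{x})=\frac14\|\bm{Bh}\|_4^4+\frac14\|\bm{Ax}\|_4^4+\frac12\|\bar{\bm{y}}\odot\bm{Bh}+\overline{\bm{Ax}}\|_2^2$$ are both convex on $\mathbb{R}^{d_1+d_2}$.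
   Context: $\odot$ is the Hadamard (elementwise) product, $\bar{\cdot}$ denotes entrywise complex conjugation, and for $\bm{w}\in\mathbb{C}^m$, $\|\bm{w}\|_2^2=\sum_j|w_j|^2$, $\|\bm{w}\|_4^4=\sum_j|w_j|^4$. The variables $\bm{h}\in\mathbb{R}^{d_1}$, $\bm{x}\in\mathbb{R}^{d_2}$ are real. *)

theory Defs
  imports "HOL-Analysis.Analysis"
begin

text \<open>Vectors in C^m are complex^'m; matrices in C^(m x d) are complex^'d^'m.\<close>

definition hadamard :: "complex^'m \<Rightarrow> complex^'m \<Rightarrow> complex^'m" where
  "hadamard u w = (\<chi> j. u $ j * w $ j)"

definition vconj :: "complex^'m \<Rightarrow> complex^'m" where
  "vconj w = (\<chi> j. cnj (w $ j))"

definition norm2sq :: "complex^'m \<Rightarrow> real" where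
  "norm2sq w = (\<Sum>j\<in>UNIV. (cmod (w $ j))^2)"

definition norm4pow4 :: "complex^'m \<Rightarrow> real" where
  "norm4pow4 w = (\<Sum>j\<in>UNIV. (cmod (w $ j))^4)"

definition cvec :: "real^'d \<Rightarrow> complex^'d" where
  "cvec h = (\<chi> i. complex_of_real (h $ i))"

definition F1 :: "complex^'d1^'m \<Rightarrow> complex^'d2^'m \<Rightarrow> complex^'m \<Rightarrow> real^'d1 \<Rightarrow> real^'d2 \<Rightarrow> real" where
  "F1 B A y h x =
     (let Bh = B *v cvec h; Ax = A *v cvec x in
      norm4pow4 Bh / 4 + norm4pow4 Ax / 4 +
      (norm2sq (hadamard Bh Ax) + norm2sq (hadamard y Bh) + norm2sq Ax + norm2sq y) / 2)"

definition F2 :: "complex^'d1^'m \<Rightarrow> complex^'d2^'m \<Rightarrow> complex^'m \<Rightarrow> real^'d1 \<Rightarrow> real^'d2 \<Rightarrow> real" where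
  "F2 B A y h x =
     (let Bh = B *v cvec h; Ax = A *v cvec x in
      norm4pow4 Bh / 4 + norm4pow4 Ax / 4 +
      norm2sq (hadamard (vconj y) Bh + vconj Ax) / 2)"

end

theory Submission
  imports Defs
begin

text \<open>Every coordinate of \<open>Bh\<close> and \<open>Ax\<close>, and also \<open>cnj y\<^sub>j (Bh)\<^sub>j + cnj (Ax)\<^sub>j\<close>, is a
  real-linear function of \<open>(h, x)\<close>, so its squared modulus is a nonnegative convex function.
  Both objectives are sums of nonnegative multiples of such functions and of their squares,
  once the mixed quartic term of \<open>F1\<close> is absorbed:
  \<open>|u|\<^sup>4 + |v|\<^sup>4 + 2|u|\<^sup>2|v|\<^sup>2 = (|u|\<^sup>2 + |v|\<^sup>2)\<^sup>2\<close>.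
  Squares of nonnegative convex functions are convex, which finishes the proof.\<close>

lemma convex_on_norm_linear:
  fixes L :: "'a::real_vector \<Rightarrow> 'b::real_normed_vector"
  assumes "linear L" and "convex S"
  shows "convex_on S (\<lambda>p. norm (L p))"
proof (rule convex_onI)
  fix t :: real and x y :: 'a
  assume t: "0 < t" "t < 1"
  have "norm (L ((1 - t) *\<^sub>R x + t *\<^sub>R y)) = norm ((1 - t) *\<^sub>R L x + t *\<^sub>R L y)"
    using \<open>linear L\<close> by (simp add: linear_add linear_scale)
  also have "\<dots> \<le> norm ((1 - t) *\<^sub>R L x) + norm (t *\<^sub>R L y)"
    by (rule norm_triangle_ineq)
  also have "\<dots> = (1 - t) * norm (L x) + t * norm (L y)"
    using t by simp
  finally show "norm (L ((1 - t) *\<^sub>R x + t *\<^sub>R y)) \<le> (1 - t) * norm (L x) + t * norm (L y)" .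
qed (fact \<open>convex S\<close>)

lemma convex_on_power2_nonneg:
  fixes g :: "'a::real_vector \<Rightarrow> real"
  assumes "convex_on S g" and nonneg: "\<And>p. p \<in> S \<Longrightarrow> 0 \<le> g p"
  shows "convex_on S (\<lambda>p. (g p)\<^sup>2)"
proof (rule convex_onI)
  show "convex S"
    using \<open>convex_on S g\<close> by (rule convex_on_imp_convex)
  fix t :: real and x y :: 'a
  assume t: "0 < t" "t < 1" and xy: "x \<in> S" "y \<in> S"
  have "(1 - t) *\<^sub>R x + t *\<^sub>R y \<in> S"
    using \<open>convex S\<close> xy t by (intro convexD_alt) auto
  then have "0 \<le> g ((1 - t) *\<^sub>R x + t *\<^sub>R y)"
    by (rule nonneg)
  moreover have "g ((1 - t) *\<^sub>R x + t *\<^sub>R y) \<le> (1 - t) * g x + t * g y"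
    using convex_onD[OF \<open>convex_on S g\<close>, of t x y] t xy by simp
  ultimately have "(g ((1 - t) *\<^sub>R x + t *\<^sub>R y))\<^sup>2 \<le> ((1 - t) * g x + t * g y)\<^sup>2"
    by (rule power_mono[rotated])
  also have "\<dots> = (1 - t) * (g x)\<^sup>2 + t * (g y)\<^sup>2 - t * (1 - t) * (g x - g y)\<^sup>2"
    by (simp add: power2_eq_square algebra_simps)
  also have "\<dots> \<le> (1 - t) * (g x)\<^sup>2 + t * (g y)\<^sup>2"
    using t by simp
  finally show "(g ((1 - t) *\<^sub>R x + t *\<^sub>R y))\<^sup>2 \<le> (1 - t) * (g x)\<^sup>2 + t * (g y)\<^sup>2" .
qed

lemma convex_on_norm_power2_linear:
  fixes L :: "'a::real_vector \<Rightarrow> 'b::real_normed_vector"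
  assumes "linear L" and "convex S"
  shows "convex_on S (\<lambda>p. (norm (L p))\<^sup>2)"
  using convex_on_norm_linear[OF assms] by (rule convex_on_power2_nonneg) simp

lemma convex_on_sum_fun:
  fixes f :: "'i \<Rightarrow> 'a::real_vector \<Rightarrow> real"
  assumes "finite I" and "convex S" and "\<And>i. i \<in> I \<Longrightarrow> convex_on S (f i)"
  shows "convex_on S (\<lambda>p. \<Sum>i\<in>I. f i p)"
  using assms(1,3)
proof (induction I rule: finite_induct)
  case empty
  then show ?case
    using \<open>convex S\<close> by (simp add: convex_on_const)
next
  case (insert i I)
  then show ?case
    by (simp add: convex_on_add)
qed

lemma linear_cvec: "linear (cvec :: real^'d \<Rightarrow> complex^'d)"
  by (rule linearI) (simp_all add: cvec_def vec_eq_iff of_real_def scaleR_add_left)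

lemma linear_matrix_cvec_nth: "linear (\<lambda>h. ((M :: complex^'n^'m) *v cvec h) $ j)"
  using linear_compose[OF linear_compose[OF linear_cvec matrix_vector_mul_linear]
      bounded_linear.linear[OF bounded_linear_vec_nth]]
  by (simp add: o_def)

lemma linear_matrix_cvec_fst_nth: "linear (\<lambda>p. ((M :: complex^'n^'m) *v cvec (fst p)) $ j)"
  using linear_compose[OF linear_fst linear_matrix_cvec_nth] by (simp add: o_def)

lemma linear_matrix_cvec_snd_nth: "linear (\<lambda>p. ((M :: complex^'n^'m) *v cvec (snd p)) $ j)"
  using linear_compose[OF linear_snd linear_matrix_cvec_nth] by (simp add: o_def)

lemma F1_eq_sum:
  "F1 B A y h x =
     (\<Sum>j\<in>UNIV. ((cmod ((B *v cvec h) $ j))\<^sup>2 + (cmod ((A *v cvec x) $ j))\<^sup>2)\<^sup>2 / 4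
        + (cmod (y $ j))\<^sup>2 / 2 * (cmod ((B *v cvec h) $ j))\<^sup>2
        + (cmod ((A *v cvec x) $ j))\<^sup>2 / 2 + (cmod (y $ j))\<^sup>2 / 2)"
  unfolding F1_def Let_def norm4pow4_def norm2sq_def hadamard_def vec_lambda_beta
    sum_divide_distrib sum_distrib_left sum.distrib[symmetric]
  by (intro sum.cong refl) (simp add: norm_mult power_mult_distrib power2_eq_square power4_eq_xxxx field_simps)

lemma F2_eq_sum:
  "F2 B A y h x =
     (\<Sum>j\<in>UNIV. ((cmod ((B *v cvec h) $ j))\<^sup>2)\<^sup>2 / 4 + ((cmod ((A *v cvec x) $ j))\<^sup>2)\<^sup>2 / 4
        + (cmod (cnj (y $ j) * (B *v cvec h) $ j + cnj ((A *v cvec x) $ j)))\<^sup>2 / 2)"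
  unfolding F2_def Let_def norm4pow4_def norm2sq_def hadamard_def vconj_def vec_lambda_beta plus_vec_def
    sum_divide_distrib sum.distrib[symmetric]
  by (intro sum.cong refl) (simp add: power_mult_distrib)

lemma convex_F1: "convex_on UNIV (\<lambda>(h, x). F1 B A y h x)"
  unfolding case_prod_beta F1_eq_sum
  by (intro convex_on_add convex_on_sum_fun convex_on_cmul convex_on_cdiv convex_on_power2_nonneg
      convex_on_norm_power2_linear linear_matrix_cvec_fst_nth linear_matrix_cvec_snd_nth)
    (auto simp: convex_on_const)

lemma convex_F2: "convex_on UNIV (\<lambda>(h, x). F2 B A y h x)"
proof -
  have "linear (\<lambda>p. cnj (y $ j) * (B *v cvec (fst p)) $ j + cnj ((A *v cvec (snd p)) $ j))" for j
    using linear_compose[OF linear_matrix_cvec_fst_nth bounded_linear.linear[OF bounded_linear_mult_right]]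
      linear_compose[OF linear_matrix_cvec_snd_nth linear_cnj]
    by (intro linear_compose_add) (simp_all add: o_def)
  then show ?thesis
    unfolding case_prod_beta F2_eq_sum
    by (intro convex_on_add convex_on_sum_fun convex_on_cdiv convex_on_power2_nonneg
        convex_on_norm_power2_linear linear_matrix_cvec_fst_nth linear_matrix_cvec_snd_nth) auto
qed

theorem mainTheorem3:
  fixes B :: "complex^'d1^'m" and A :: "complex^'d2^'m" and y :: "complex^'m"
  shows "convex_on UNIV (\<lambda>(h, x). F1 B A y h x) \<and> convex_on UNIV (\<lambda>(h, x). F2 B A y h x)"
  using convex_F1 convex_F2 by blast

end
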